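(* Let $S=\{a_1,\ldots,a_m\}$ be an alphabet of $m$ distinct letters and let $r_1,\ldots,r_m$ be nonnegative integers. For $k\ge0$ let $n_k$ denote the number of factorizations on $S$ with exactly $k$ parts such that each part is a Carlitz word and, for each $i$, the letter $a_i$ is used exactly $r_i$ times in total. Then \[ \prod_{i=1}^m l_{r_i}(x) = \sum_{k\ge 0} n_k\, l_k(x). \]
   Context: A word is a finite sequence of letters; it is Carlitz if no two adjacent letters are equal. A factorization on $S$ is an ordered list $(\phi_1)\cdots(\phi_k)$ of nonempty words on $S$, its parts. The polynomials $l_k$ are defined by $\sum_{k\ge0}l_k(x)z^k=e^{xz/(1+z)}$, i.e. $l_k(x)=(-1)^kL_k^{(-1)}(x)$ where $L_k^{(\alpha)}$ are the generalized Laguerre polynomials. *)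

theory Defs
  imports Complex_Main "HOL-Computational_Algebra.Formal_Power_Series"
begin

definition lpoly :: "nat \<Rightarrow> real \<Rightarrow> real" where
  "lpoly k x = fps_nth (fps_compose (fps_exp x) (fps_X / (1 + fps_X))) k"

definition carlitz :: "'a list \<Rightarrow> bool" where
  "carlitz w \<longleftrightarrow> (\<forall>i. Suc i < length w \<longrightarrow> w ! i \<noteq> w ! Suc i)"

definition carlitz_facts :: "'a set \<Rightarrow> (nat \<Rightarrow> 'a) \<Rightarrow> nat \<Rightarrow> (nat \<Rightarrow> nat) \<Rightarrow> nat \<Rightarrow> 'a list list set" where
  "carlitz_facts S a m r k = {F. length F = k \<and> (\<forall>w\<in>set F. w \<noteq> [] \<and> set w \<subseteq> S \<and> carlitz w)
      \<and> (\<forall>i<m. count_list (concat F) (a i) = r i)}"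

end

theory Submission
  imports Defs
begin

text \<open>
  Let \<open>t\<close> mark the length of a word and \<open>v\<^sub>c = y\<^bsup>\<omega> c\<^esup>\<close> each occurrence of the letter \<open>c\<close>;
  let \<open>C\<close> be the generating function of nonempty Carlitz words and \<open>C\<^sub>c\<close> that of those
  ending in \<open>c\<close>. Appending \<open>c\<close> to a Carlitz word not ending in \<open>c\<close> gives
  \<open>C\<^sub>c = v\<^sub>c t (1 + C - C\<^sub>c)\<close>, hence \<open>C / (1 + C) = \<Sum>\<^sub>c v\<^sub>c t / (1 + v\<^sub>c t)\<close>. Since
  \<open>L(z) = exp (x z / (1 + z))\<close> depends on \<open>z\<close> only through \<open>z / (1 + z)\<close> and turns sums of such
  terms into products, \<open>L(C) = \<Prod>\<^sub>c L(v\<^sub>c t)\<close>. In \<open>L(C) = \<Sum>\<^sub>k l\<^sub>k C\<^sup>k\<close> the coefficient of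
  \<open>t\<^sup>N y\<^sup>D\<close> is \<open>\<Sum>\<^sub>k l\<^sub>k\<close> times the number of factorizations with \<open>k\<close> parts, \<open>N\<close> letters and
  weight \<open>D\<close>; in \<open>\<Prod>\<^sub>c L(v\<^sub>c t)\<close> it is a sum of products of the \<open>l\<^sub>k\<close> over letter
  multiplicities of weight \<open>D\<close>. With \<open>\<omega> (a\<^sub>i) = B\<^sup>i\<close> and \<open>B > N\<close> the weight determines the
  multiplicities as base-\<open>B\<close> digits, so both sums collapse to the two sides of the identity.

  As \<open>fps_exp\<close> needs a field of coefficients, \<open>L(C) = \<Prod>\<^sub>c L(v\<^sub>c t)\<close> is proved by showing that
  both sides solve \<open>F' = F \<cdot> x U'\<close> with \<open>U = C / (1 + C)\<close> and have the same constant term.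
\<close>

unbundle fps_syntax

section \<open>Power series identities\<close>

lemma fps_const_sum: "fps_const (\<Sum>i\<in>A. f i) = (\<Sum>i\<in>A. fps_const (f i))"
  by (induction A rule: infinite_finite_induct) (simp_all flip: fps_const_add)

lemma fps_const_prod: "fps_const (\<Prod>i\<in>A. f i) = (\<Prod>i\<in>A. fps_const (f i))"
  by (induction A rule: infinite_finite_induct) (simp_all flip: fps_const_mult)

definition fps_div_one_plus :: "'a::comm_ring_1 fps \<Rightarrow> 'a fps" where
  "fps_div_one_plus v = v * fps_right_inverse (1 + v) 1"

lemma fps_div_one_plus_mult:
  assumes "v $ 0 = 0"
  shows "fps_div_one_plus v * (1 + v) = v"
  using fps_right_inverse[of "1 + v" 1] assms by (simp add: fps_div_one_plus_def mult_ac)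

lemma fps_div_one_plus_eq:
  fixes v C D :: "'a::comm_ring_1 fps"
  assumes "v $ 0 = 0" "D = v * (1 + C - D)"
  shows "D = fps_div_one_plus v * (1 + C)"
proof -
  have "D * (1 + v) = v * (1 + C)"
    using assms(2) by (simp add: algebra_simps)
  then have "D * ((1 + v) * fps_right_inverse (1 + v) 1) = v * (1 + C) * fps_right_inverse (1 + v) 1"
    by (metis mult.assoc)
  then show ?thesis
    using fps_right_inverse[of "1 + v" 1] assms(1) by (simp add: fps_div_one_plus_def mult_ac)
qed

lemma fps_ode_unique:
  fixes f g Q :: "'a::{idom,semiring_char_0} fps"
  assumes "fps_deriv f = f * Q" "fps_deriv g = g * Q" "f $ 0 = g $ 0"
  shows "f = g"
proof -
  define e where "e = f - g"
  have de: "fps_deriv e = e * Q"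
    using assms(1,2) by (simp add: e_def algebra_simps)
  have "e $ n = 0" for n
  proof (induction n rule: less_induct)
    case (less n)
    show ?case
    proof (cases n)
      case 0
      then show ?thesis using assms(3) by (simp add: e_def)
    next
      case (Suc k)
      have "of_nat (Suc k) * e $ Suc k = (e * Q) $ k"
        using arg_cong[OF de, of "\<lambda>h. h $ k"] by simp
      also have "\<dots> = 0"
        using less Suc by (simp add: fps_mult_nth)
      finally have "(of_nat (Suc k) :: 'a) * e $ Suc k = 0" .
      then show ?thesis using Suc of_nat_neq_0[of k] by (auto simp only: mult_eq_0_iff)
    qed
  qed
  then show ?thesis by (simp add: e_def fps_eq_iff)
qed

lemma fps_deriv_prod_eq_mult_sum:
  fixes f Q :: "'b \<Rightarrow> 'a::comm_ring_1 fps"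
  assumes "finite I" "\<And>i. i \<in> I \<Longrightarrow> fps_deriv (f i) = f i * Q i"
  shows "fps_deriv (\<Prod>i\<in>I. f i) = (\<Prod>i\<in>I. f i) * (\<Sum>i\<in>I. Q i)"
  using assms by (induction I rule: finite_induct) (simp_all add: algebra_simps)

lemma fps_deriv_eq_of_mult_one_plus:
  fixes C U :: "'a::comm_ring_1 fps"
  assumes "U * (1 + C) = C"
  shows "fps_deriv C = fps_deriv U * (1 + C)^2"
proof -
  have unit: "(1 - U) * (1 + C) = 1"
    using assms by (simp add: algebra_simps)
  have "fps_deriv C * (1 - U) = fps_deriv U * (1 + C)"
    using arg_cong[OF assms, of fps_deriv] by (simp add: algebra_simps)
  then have "fps_deriv C * ((1 - U) * (1 + C)) = fps_deriv U * (1 + C)^2"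
    by (metis mult.assoc power2_eq_square)
  then show ?thesis by (simp add: unit)
qed

lemma fps_compose_one_plus_X_power:
  fixes C :: "'a::idom fps"
  assumes "C $ 0 = 0"
  shows "(1 + fps_X) ^ n oo C = (1 + C) ^ n"
  using assms by (simp add: fps_compose_power[symmetric] fps_compose_add_distrib)

lemma fps_compose_ode:
  fixes L C U :: "'a::idom fps"
  assumes L: "fps_deriv L * (1 + fps_X)^2 = fps_const c * L"
    and C: "C $ 0 = 0" "U * (1 + C) = C"
  shows "fps_deriv (L oo C) = (L oo C) * (fps_const c * fps_deriv U)"
proof -
  have "fps_deriv (L oo C) = (fps_deriv L oo C) * (1 + C)^2 * fps_deriv U"
    using C by (simp add: fps_compose_deriv fps_deriv_eq_of_mult_one_plus mult.assoc)
  also have "(fps_deriv L oo C) * (1 + C)^2 = fps_const c * (L oo C)"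
    using arg_cong[OF L, of "\<lambda>h. h oo C"] C(1)
    by (simp add: fps_compose_mult_distrib fps_compose_one_plus_X_power)
  finally show ?thesis by (simp add: mult_ac)
qed

lemma fps_compose_eq_prod_compose:
  fixes L C :: "'a::{idom,semiring_char_0} fps" and Cs Us :: "'b \<Rightarrow> 'a fps"
  assumes L: "fps_deriv L * (1 + fps_X)^2 = fps_const c * L" "L $ 0 = 1"
    and I: "finite I" "\<And>i. i \<in> I \<Longrightarrow> Cs i $ 0 = 0" "\<And>i. i \<in> I \<Longrightarrow> Us i * (1 + Cs i) = Cs i"
    and C: "C $ 0 = 0" "(\<Sum>i\<in>I. Us i) * (1 + C) = C"
  shows "L oo C = (\<Prod>i\<in>I. L oo Cs i)"
proof (rule fps_ode_unique)
  show "fps_deriv (L oo C) = (L oo C) * (fps_const c * fps_deriv (\<Sum>i\<in>I. Us i))"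
    using fps_compose_ode[OF L(1) C] .
  have "fps_deriv (\<Prod>i\<in>I. L oo Cs i) = (\<Prod>i\<in>I. L oo Cs i) * (\<Sum>i\<in>I. fps_const c * fps_deriv (Us i))"
    using I by (intro fps_deriv_prod_eq_mult_sum fps_compose_ode[OF L(1)]) auto
  then show "fps_deriv (\<Prod>i\<in>I. L oo Cs i) = (\<Prod>i\<in>I. L oo Cs i) * (fps_const c * fps_deriv (\<Sum>i\<in>I. Us i))"
    by (simp add: fps_deriv_sum sum_distrib_left)
  show "(L oo C) $ 0 = (\<Prod>i\<in>I. L oo Cs i) $ 0"
    using L(2) I(1) by (simp add: fps_prod_nth')
qed

section \<open>The Laguerre series\<close>

definition fps_lift :: "'a::zero fps \<Rightarrow> 'a fps fps" where
  "fps_lift f = Abs_fps (\<lambda>n. fps_const (f $ n))"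

lemma fps_lift_nth [simp]: "fps_lift f $ n = fps_const (f $ n)"
  by (simp add: fps_lift_def)

lemma fps_lift_add: "fps_lift (f + g) = fps_lift f + fps_lift (g :: 'a::monoid_add fps)"
  by (simp add: fps_eq_iff)

lemma fps_lift_mult: "fps_lift (f * g) = fps_lift f * fps_lift (g :: 'a::comm_ring_1 fps)"
  by (simp add: fps_eq_iff fps_mult_nth fps_const_sum)

lemma fps_lift_deriv: "fps_lift (fps_deriv f) = fps_deriv (fps_lift (f :: 'a::comm_ring_1 fps))"
  by (simp add: fps_eq_iff flip: fps_of_nat)

lemma fps_lift_const: "fps_lift (fps_const c) = fps_const (fps_const (c :: 'a::comm_ring_1))"
  by (simp add: fps_eq_iff)

lemma fps_lift_X: "fps_lift fps_X = (fps_X :: 'a::comm_ring_1 fps fps)"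
  by (simp add: fps_eq_iff fps_X_def)

lemma fps_lift_1: "fps_lift 1 = (1 :: 'a::comm_ring_1 fps fps)"
  by (simp add: fps_eq_iff)

definition laguerre_fps :: "real \<Rightarrow> real fps fps" where
  "laguerre_fps x = fps_lift (fps_exp x oo (fps_X / (1 + fps_X)))"

lemma laguerre_fps_nth: "laguerre_fps x $ k = fps_const (lpoly k x)"
  by (simp add: laguerre_fps_def lpoly_def)

lemma laguerre_fps_nth_0: "laguerre_fps x $ 0 = 1"
  by (simp add: laguerre_fps_nth lpoly_def)

lemma fps_exp_compose_ode:
  fixes c :: "'a::field_char_0"
  shows "fps_deriv (fps_exp c oo (fps_X / (1 + fps_X))) * (1 + fps_X)^2
     = fps_const c * (fps_exp c oo (fps_X / (1 + fps_X)))"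
proof -
  define g :: "'a fps" where "g = fps_X / (1 + fps_X)"
  have g: "g * (1 + fps_X) = fps_X" "g $ 0 = 0"
    unfolding g_def by (simp_all add: fps_divide_unit inverse_mult_eq_1 mult.assoc)
  have "fps_deriv g * (1 + fps_X)^2 = 1"
    using fps_deriv_eq_of_mult_one_plus[OF g(1)] by simp
  moreover have "fps_deriv (fps_exp c oo g) = fps_const c * (fps_exp c oo g) * fps_deriv g"
    using g(2) by (simp add: fps_compose_deriv fps_compose_mult_distrib)
  ultimately show ?thesis
    by (simp add: g_def mult.assoc)
qed

lemma laguerre_fps_ode:
  "fps_deriv (laguerre_fps x) * (1 + fps_X)^2 = fps_const (fps_const x) * laguerre_fps x"
  using arg_cong[OF fps_exp_compose_ode[of x], of fps_lift]
  by (simp add: laguerre_fps_def fps_lift_mult fps_lift_add fps_lift_deriv fps_lift_const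
      fps_lift_X fps_lift_1 power2_eq_square)

section \<open>The generating function of Carlitz words\<close>

lemma carlitz_snoc: "carlitz (v @ [c]) \<longleftrightarrow> carlitz v \<and> (v = [] \<or> last v \<noteq> c)"
proof (cases v rule: rev_cases)
  case (snoc w d)
  then show ?thesis
    by (auto simp: carlitz_def nth_append less_Suc_eq)
qed (simp add: carlitz_def)

definition carlitz_words :: "'a set \<Rightarrow> nat \<Rightarrow> 'a list set" where
  "carlitz_words S n = {w. length w = n \<and> w \<noteq> [] \<and> set w \<subseteq> S \<and> carlitz w}"

lemma finite_carlitz_words: "finite S \<Longrightarrow> finite (carlitz_words S n)"
  by (rule finite_subset[OF _ finite_lists_length_eq[of S n]]) (auto simp: carlitz_words_def)

lemma carlitz_words_0 [simp]: "carlitz_words S 0 = {}"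
  by (auto simp: carlitz_words_def)

definition carlitz_gf :: "'a set \<Rightarrow> ('a \<Rightarrow> nat) \<Rightarrow> real fps fps" where
  "carlitz_gf S \<omega> = Abs_fps (\<lambda>n. \<Sum>w\<in>carlitz_words S n. fps_X ^ sum_list (map \<omega> w))"

definition carlitz_gf_last :: "'a set \<Rightarrow> ('a \<Rightarrow> nat) \<Rightarrow> 'a \<Rightarrow> real fps fps" where
  "carlitz_gf_last S \<omega> c =
     Abs_fps (\<lambda>n. \<Sum>w\<in>{w \<in> carlitz_words S n. last w = c}. fps_X ^ sum_list (map \<omega> w))"

lemma carlitz_gf_nth: "carlitz_gf S \<omega> $ n = (\<Sum>w\<in>carlitz_words S n. fps_X ^ sum_list (map \<omega> w))"
  by (simp add: carlitz_gf_def)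

lemma carlitz_words_last_Suc:
  assumes "c \<in> S"
  shows "{w \<in> carlitz_words S (Suc n). last w = c} =
           (\<lambda>v. v @ [c]) ` {v. length v = n \<and> set v \<subseteq> S \<and> carlitz v \<and> (v = [] \<or> last v \<noteq> c)}"
proof (intro set_eqI iffI)
  fix w assume w: "w \<in> {w \<in> carlitz_words S (Suc n). last w = c}"
  then have "w = butlast w @ [c]"
    by (auto simp: carlitz_words_def)
  then obtain v where "w = v @ [c]" ..
  with w show "w \<in> (\<lambda>v. v @ [c]) ` {v. length v = n \<and> set v \<subseteq> S \<and> carlitz v \<and> (v = [] \<or> last v \<noteq> c)}"
    by (auto simp: carlitz_words_def carlitz_snoc)
qed (use assms in \<open>auto simp: carlitz_words_def carlitz_snoc, simp add: carlitz_def\<close>)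

lemma carlitz_gf_last_eq:
  assumes "finite S" "c \<in> S"
  shows "carlitz_gf_last S \<omega> c =
           fps_const (fps_X ^ \<omega> c) * fps_X * (1 + carlitz_gf S \<omega> - carlitz_gf_last S \<omega> c)"
proof (rule fps_ext)
  fix n
  show "carlitz_gf_last S \<omega> c $ n =
          (fps_const (fps_X ^ \<omega> c) * fps_X * (1 + carlitz_gf S \<omega> - carlitz_gf_last S \<omega> c)) $ n"
  proof (cases n)
    case 0
    then show ?thesis by (simp add: carlitz_gf_last_def)
  next
    case (Suc k)
    define V where "V = {v. length v = k \<and> set v \<subseteq> S \<and> carlitz v \<and> (v = [] \<or> last v \<noteq> c)}"
    have V: "(\<Sum>v\<in>V. fps_X ^ sum_list (map \<omega> v)) = (1 + carlitz_gf S \<omega> - carlitz_gf_last S \<omega> c) $ k"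
    proof (cases "k = 0")
      case True
      then have "V = {[]}" by (auto simp: V_def carlitz_def)
      then show ?thesis using True by (simp add: carlitz_gf_def carlitz_gf_last_def)
    next
      case False
      then have "V = carlitz_words S k - {w \<in> carlitz_words S k. last w = c}"
        by (auto simp: V_def carlitz_words_def)
      then show ?thesis
        using False finite_carlitz_words[OF assms(1)]
        by (simp add: carlitz_gf_def carlitz_gf_last_def sum_diff)
    qed
    have "carlitz_gf_last S \<omega> c $ Suc k = (\<Sum>v\<in>V. fps_X ^ sum_list (map \<omega> (v @ [c])))"
      unfolding carlitz_gf_last_def fps_nth_Abs_fps carlitz_words_last_Suc[OF assms(2)] V_def
      by (subst sum.reindex) (auto intro: inj_onI)
    also have "\<dots> = fps_X ^ \<omega> c * (\<Sum>v\<in>V. fps_X ^ sum_list (map \<omega> v))"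
      by (simp add: sum_distrib_left power_add mult.commute)
    finally show ?thesis
      using Suc V by (simp add: mult.assoc)
  qed
qed

lemma carlitz_gf_eq_sum_last:
  assumes "finite S"
  shows "carlitz_gf S \<omega> = (\<Sum>c\<in>S. carlitz_gf_last S \<omega> c)"
proof (rule fps_ext)
  fix n
  have "(\<Sum>w\<in>carlitz_words S n. fps_X ^ sum_list (map \<omega> w)) =
          (\<Sum>c\<in>S. \<Sum>w\<in>{w \<in> carlitz_words S n. last w = c}. fps_X ^ sum_list (map \<omega> w))"
    using assms finite_carlitz_words[OF assms]
    by (intro sum.group[symmetric]) (auto simp: carlitz_words_def)
  then show "carlitz_gf S \<omega> $ n = (\<Sum>c\<in>S. carlitz_gf_last S \<omega> c) $ n"
    by (simp add: carlitz_gf_def carlitz_gf_last_def fps_sum_nth)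
qed

lemma carlitz_gf_div_one_plus:
  assumes "finite S"
  shows "(\<Sum>c\<in>S. fps_div_one_plus (fps_const (fps_X ^ \<omega> c) * fps_X)) * (1 + carlitz_gf S \<omega>)
           = carlitz_gf S \<omega>"
proof -
  have "(\<Sum>c\<in>S. fps_div_one_plus (fps_const (fps_X ^ \<omega> c) * fps_X) * (1 + carlitz_gf S \<omega>))
          = (\<Sum>c\<in>S. carlitz_gf_last S \<omega> c)"
    using carlitz_gf_last_eq[OF assms] by (intro sum.cong refl fps_div_one_plus_eq[symmetric]) simp_all
  then show ?thesis
    by (simp add: sum_distrib_right carlitz_gf_eq_sum_last[OF assms, of \<omega>, symmetric])
qed

lemma laguerre_compose_carlitz_gf:
  assumes "finite S"
  shows "laguerre_fps x oo carlitz_gf S \<omega> = (\<Prod>c\<in>S. laguerre_fps x oo (fps_const (fps_X ^ \<omega> c) * fps_X))"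
proof (rule fps_compose_eq_prod_compose[OF laguerre_fps_ode laguerre_fps_nth_0 assms])
  show "(\<Sum>c\<in>S. fps_div_one_plus (fps_const (fps_X ^ \<omega> c) * fps_X)) * (1 + carlitz_gf S \<omega>)
          = carlitz_gf S \<omega>"
    by (rule carlitz_gf_div_one_plus[OF assms])
qed (simp_all add: carlitz_gf_def fps_div_one_plus_mult)

section \<open>Factorizations into Carlitz words\<close>

definition carlitz_factorizations :: "'a set \<Rightarrow> nat \<Rightarrow> nat \<Rightarrow> 'a list list set" where
  "carlitz_factorizations S k n = {F. length F = k \<and> (\<forall>w\<in>set F. w \<noteq> [] \<and> set w \<subseteq> S \<and> carlitz w)
      \<and> length (concat F) = n}"

lemma finite_carlitz_factorizations:
  assumes "finite S"
  shows "finite (carlitz_factorizations S k n)"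
proof -
  let ?W = "{w. set w \<subseteq> S \<and> length w \<le> n}"
  have "carlitz_factorizations S k n \<subseteq> {F. set F \<subseteq> ?W \<and> length F = k}"
    by (auto simp: carlitz_factorizations_def dest!: split_list)
  moreover have "finite ?W"
    using assms by (rule finite_lists_length_le)
  ultimately show ?thesis
    by (rule finite_subset[OF _ finite_lists_length_eq])
qed

lemma carlitz_factorizations_0: "carlitz_factorizations S 0 n = (if n = 0 then {[]} else {})"
  by (auto simp: carlitz_factorizations_def)

lemma carlitz_factorizations_Suc:
  "carlitz_factorizations S (Suc k) n = (\<lambda>(w, F). w # F) `
     (SIGMA w:(\<Union>i\<in>{0..n}. carlitz_words S i). carlitz_factorizations S k (n - length w))"
proof (intro set_eqI iffI)
  fix G assume "G \<in> carlitz_factorizations S (Suc k) n"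
  then obtain w F where "G = w # F" "w \<in> carlitz_words S (length w)" "length w \<le> n"
      "F \<in> carlitz_factorizations S k (n - length w)"
    by (cases G) (auto simp: carlitz_factorizations_def carlitz_words_def)
  then show "G \<in> (\<lambda>(w, F). w # F) ` (SIGMA w:(\<Union>i\<in>{0..n}. carlitz_words S i). carlitz_factorizations S k (n - length w))"
    by force
qed (fastforce simp: carlitz_factorizations_def carlitz_words_def)

lemma carlitz_gf_power_nth:
  assumes "finite S"
  shows "carlitz_gf S \<omega> ^ k $ n = (\<Sum>F\<in>carlitz_factorizations S k n. fps_X ^ sum_list (map \<omega> (concat F)))"
proof (induction k arbitrary: n)
  case 0
  then show ?case by (simp add: carlitz_factorizations_0)
next
  case (Suc k)
  let ?W = "\<Union>i\<in>{0..n}. carlitz_words S i"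
  let ?f = "\<lambda>w F. fps_X ^ sum_list (map \<omega> (concat (w # F))) :: real fps"
  have "carlitz_gf S \<omega> ^ Suc k $ n = (\<Sum>i=0..n. carlitz_gf S \<omega> $ i * carlitz_gf S \<omega> ^ k $ (n - i))"
    by (simp add: fps_mult_nth)
  also have "\<dots> = (\<Sum>i=0..n. \<Sum>w\<in>carlitz_words S i. \<Sum>F\<in>carlitz_factorizations S k (n - i). ?f w F)"
    by (simp add: Suc.IH carlitz_gf_nth sum_product power_add)
  also have "\<dots> =
          (\<Sum>i=0..n. \<Sum>w\<in>carlitz_words S i. \<Sum>F\<in>carlitz_factorizations S k (n - length w). ?f w F)"
    by (intro sum.cong refl) (simp add: carlitz_words_def)
  also have "\<dots> = (\<Sum>w\<in>?W. \<Sum>F\<in>carlitz_factorizations S k (n - length w). ?f w F)"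
    using finite_carlitz_words[OF assms]
    by (intro sum.UNION_disjoint[symmetric]) (auto simp: carlitz_words_def)
  also have "\<dots> = (\<Sum>(w, F)\<in>(SIGMA w:?W. carlitz_factorizations S k (n - length w)). ?f w F)"
    using finite_carlitz_words[OF assms] finite_carlitz_factorizations[OF assms]
    by (intro sum.Sigma) auto
  also have "\<dots> = (\<Sum>G\<in>carlitz_factorizations S (Suc k) n. fps_X ^ sum_list (map \<omega> (concat G)))"
    unfolding carlitz_factorizations_Suc
    by (subst sum.reindex) (auto simp: inj_on_def case_prod_beta)
  finally show ?case .
qed

lemma laguerre_compose_carlitz_gf_nth:
  assumes "finite S"
  shows "((laguerre_fps x oo carlitz_gf S \<omega>) $ n) $ D =
     (\<Sum>k\<le>n. lpoly k x * card {F \<in> carlitz_factorizations S k n. sum_list (map \<omega> (concat F)) = D})"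
proof -
  have "(carlitz_gf S \<omega> ^ k $ n) $ D = card {F \<in> carlitz_factorizations S k n. sum_list (map \<omega> (concat F)) = D}"
    for k
    using finite_carlitz_factorizations[OF assms]
    by (simp add: carlitz_gf_power_nth[OF assms] fps_sum_nth sum.If_cases Int_def eq_commute)
  then show ?thesis
    by (simp add: fps_compose_nth laguerre_fps_nth atLeast0AtMost fps_sum_nth)
qed

lemma laguerre_prod_compose_nth:
  assumes "finite S"
  shows "((\<Prod>c\<in>S. laguerre_fps x oo (fps_const (fps_X ^ \<omega> c) * fps_X)) $ n) $ D =
     (\<Sum>M\<in>{M \<in> multisets_of_size S n. (\<Sum>c\<in>S. \<omega> c * count M c) = D}. \<Prod>c\<in>S. lpoly (count M c) x)"
proof -
  have "(\<Prod>c\<in>S. (laguerre_fps x oo (fps_const (fps_X ^ \<omega> c) * fps_X)) $ count M c) =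
          fps_X ^ (\<Sum>c\<in>S. \<omega> c * count M c) * fps_const (\<Prod>c\<in>S. lpoly (count M c) x)" for M
    by (simp add: fps_compose_linear laguerre_fps_nth prod.distrib power_sum power_mult fps_const_prod)
  then have "((\<Prod>c\<in>S. laguerre_fps x oo (fps_const (fps_X ^ \<omega> c) * fps_X)) $ n) $ D =
      (\<Sum>M\<in>multisets_of_size S n. if (\<Sum>c\<in>S. \<omega> c * count M c) = D then \<Prod>c\<in>S. lpoly (count M c) x else 0)"
    using assms by (simp add: fps_prod_nth' fps_sum_nth) (auto intro: sum.cong)
  then show ?thesis
    using assms by (simp add: sum.inter_filter[OF finite_multisets_of_size])
qed

section \<open>Letter multiplicities as base-\<open>B\<close> digits\<close>

lemma base_digits_unique:
  fixes s t :: "nat \<Rightarrow> nat"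
  assumes "\<forall>i<j. s i < B" "\<forall>i<j. t i < B" "(\<Sum>i<j. s i * B ^ i) = (\<Sum>i<j. t i * B ^ i)" "i < j"
  shows "s i = t i"
  using assms
proof (induction j arbitrary: s t i)
  case (Suc j)
  have digits: "(\<Sum>i<Suc j. f i * B ^ i) = f 0 + B * (\<Sum>i<j. f (Suc i) * B ^ i)" for f :: "nat \<Rightarrow> nat"
    unfolding sum.lessThan_Suc_shift by (simp add: sum_distrib_left mult_ac)
  have eq: "s 0 + B * (\<Sum>i<j. s (Suc i) * B ^ i) = t 0 + B * (\<Sum>i<j. t (Suc i) * B ^ i)"
    using Suc.prems(3) unfolding digits .
  have "s 0 < B" "t 0 < B" using Suc.prems(1,2) by auto
  then have "s 0 = t 0" "(\<Sum>i<j. s (Suc i) * B ^ i) = (\<Sum>i<j. t (Suc i) * B ^ i)"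
    using arg_cong[OF eq, of "\<lambda>n. n mod B"] arg_cong[OF eq, of "\<lambda>n. n div B"] by simp_all
  with Suc.IH[of "s \<circ> Suc" "t \<circ> Suc"] Suc.prems show ?case
    by (cases i) auto
qed simp

lemma sum_list_map_eq_sum_count_mset:
  assumes "finite S" "set w \<subseteq> S"
  shows "sum_list (map \<omega> w) = (\<Sum>c\<in>S. \<omega> c * count (mset w) c)"
  using sum_list_map_eq_sum_count2[OF assms(2,1)] by (simp add: count_mset mult.commute)

locale letter_encoding =
  fixes a :: "nat \<Rightarrow> 'a" and m :: nat and r :: "nat \<Rightarrow> nat"
  assumes inj: "inj_on a {..<m}"
begin

abbreviation "alphabet \<equiv> a ` {..<m}"

abbreviation "num_letters \<equiv> \<Sum>i<m. r i"

definition letters :: "'a multiset" where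
  "letters = (\<Sum>i<m. replicate_mset (r i) (a i))"

definition digit :: "'a \<Rightarrow> nat" where
  "digit c = Suc num_letters ^ inv_into {..<m} a c"

definition weight :: "'a multiset \<Rightarrow> nat" where
  "weight M = (\<Sum>c\<in>alphabet. digit c * count M c)"

lemma count_letters: "i < m \<Longrightarrow> count letters (a i) = r i"
proof -
  assume i: "i < m"
  have "count letters (a i) = (\<Sum>j<m. if j = i then r j else 0)"
    unfolding letters_def count_sum count_replicate_mset
    using inj i by (intro sum.cong refl) (auto dest: inj_onD)
  then show ?thesis using i by simp
qed

lemma set_mset_letters: "set_mset letters \<subseteq> alphabet"
  unfolding letters_def by (induction m) (auto split: if_splits)

lemma size_letters: "size letters = num_letters"
  unfolding letters_def by (induction m) simp_all

lemma letters_in_multisets_of_size: "letters \<in> multisets_of_size alphabet num_letters"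
  using set_mset_letters size_letters by (simp add: multisets_of_size_def)

lemma weight_eq_iff:
  assumes "M \<in> multisets_of_size alphabet num_letters"
  shows "weight M = weight letters \<longleftrightarrow> M = letters"
proof
  have reindex: "weight K = (\<Sum>i<m. count K (a i) * Suc num_letters ^ i)" for K
    using inj by (simp add: weight_def digit_def sum.reindex ac_simps)
  have bound: "count K c < Suc num_letters" if "K \<in> multisets_of_size alphabet num_letters" for K c
    using count_le_size[of K c] that by (simp add: multisets_of_size_def)
  assume "weight M = weight letters"
  then have digits: "(\<Sum>i<m. count M (a i) * Suc num_letters ^ i) = (\<Sum>i<m. count letters (a i) * Suc num_letters ^ i)"
    unfolding reindex .
  show "M = letters"
  proof (rule multiset_eqI)
    fix c
    show "count M c = count letters c"
    proof (cases "c \<in> alphabet")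
      case True
      then obtain i where i: "i < m" "c = a i" by blast
      have "count M (a i) = count letters (a i)"
        by (rule base_digits_unique[OF _ _ digits i(1)])
          (use bound assms letters_in_multisets_of_size in auto)
      then show ?thesis using i(2) by simp
    next
      case False
      then have "c \<notin># M" "c \<notin># letters"
        using assms set_mset_letters by (auto simp: multisets_of_size_def)
      then show ?thesis by (simp add: not_in_iff)
    qed
  qed
qed simp

lemma multisets_of_weight_letters:
  "{M \<in> multisets_of_size alphabet num_letters. (\<Sum>c\<in>alphabet. digit c * count M c) = weight letters} = {letters}"
  using weight_eq_iff letters_in_multisets_of_size by (auto simp flip: weight_def)

lemma mset_eq_letters_iff:
  assumes "set w \<subseteq> alphabet"
  shows "mset w = letters \<longleftrightarrow> (\<forall>i<m. count_list w (a i) = r i)"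
proof -
  have "count (mset w) c = count letters c" if "\<forall>i<m. count_list w (a i) = r i" for c
  proof (cases "c \<in> alphabet")
    case True
    then obtain i where "i < m" "c = a i" by blast
    then show ?thesis
      using that count_letters by (simp add: count_mset)
  next
    case False
    then have "c \<notin># mset w" "c \<notin># letters"
      using assms set_mset_letters by auto
    then show ?thesis by (simp add: not_in_iff)
  qed
  then show ?thesis
    using count_letters by (auto intro: multiset_eqI simp flip: count_mset)
qed

lemma carlitz_facts_eq_weight:
  "carlitz_facts alphabet a m r k =
     {F \<in> carlitz_factorizations alphabet k num_letters. sum_list (map digit (concat F)) = weight letters}"
proof (intro set_eqI)
  fix F
  show "F \<in> carlitz_facts alphabet a m r k \<longleftrightarrow>
          F \<in> {F \<in> carlitz_factorizations alphabet k num_letters. sum_list (map digit (concat F)) = weight letters}"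
  proof (cases "\<forall>w\<in>set F. w \<noteq> [] \<and> set w \<subseteq> alphabet \<and> carlitz w")
    case True
    then have alph: "set (concat F) \<subseteq> alphabet" by auto
    have "sum_list (map digit (concat F)) = weight (mset (concat F))"
      using sum_list_map_eq_sum_count_mset[OF _ alph] by (simp add: weight_def)
    moreover have "mset (concat F) \<in> multisets_of_size alphabet num_letters"
      if "length (concat F) = num_letters"
      using alph that by (simp add: multisets_of_size_def)
    moreover have "length (concat F) = num_letters" if "mset (concat F) = letters"
      using that size_letters by (metis size_mset)
    ultimately show ?thesis
      using mset_eq_letters_iff[OF alph] weight_eq_iff True
      unfolding carlitz_facts_def carlitz_factorizations_def by auto
  qed (auto simp: carlitz_facts_def carlitz_factorizations_def)
qed

lemma prod_lpoly_letters: "(\<Prod>i<m. lpoly (r i) x) = (\<Prod>c\<in>alphabet. lpoly (count letters c) x)"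
  using inj by (simp add: prod.reindex count_letters)

end

theorem corollary2p8:
  fixes a :: "nat \<Rightarrow> 'a" and m :: nat and r :: "nat \<Rightarrow> nat" and x :: real
  assumes "inj_on a {..<m}"
  shows "(\<Prod>i<m. lpoly (r i) x)
       = (\<Sum>k\<le>(\<Sum>i<m. r i). real (card (carlitz_facts (a ` {..<m}) a m r k)) * lpoly k x)"
proof -
  interpret letter_encoding a m r
    using assms by unfold_locales
  have "(\<Prod>i<m. lpoly (r i) x) = (\<Prod>c\<in>alphabet. lpoly (count letters c) x)"
    by (rule prod_lpoly_letters)
  also have "\<dots> = ((\<Prod>c\<in>alphabet. laguerre_fps x oo (fps_const (fps_X ^ digit c) * fps_X)) $ num_letters) $ weight letters"
    by (simp add: laguerre_prod_compose_nth multisets_of_weight_letters)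
  also have "\<dots> = ((laguerre_fps x oo carlitz_gf alphabet digit) $ num_letters) $ weight letters"
    by (simp add: laguerre_compose_carlitz_gf)
  also have "\<dots> = (\<Sum>k\<le>num_letters. lpoly k x * card (carlitz_facts alphabet a m r k))"
    by (simp add: laguerre_compose_carlitz_gf_nth carlitz_facts_eq_weight)
  finally show ?thesis
    by (simp add: mult.commute)
qed

end
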